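(* For a polynomial $f(z)$ with complex coefficients define the rational function $$\mathcal{L}_z(f)=f\frac{d^2f}{dz^2}-\left(\frac{df}{dz}\right)^2+\frac{f}{z}\frac{df}{dz}.$$ Let $f(z)$ and $g(z)$ be arbitrary polynomials. Then: (a) $\mathcal{L}_z(kf)=k^2\,\mathcal{L}_z(f)$ for every constant $k$; (b) $\mathcal{L}_z(fg)=f^2\,\mathcal{L}_z(g)+g^2\,\mathcal{L}_z(f)$; (c) if $h=-z\,\mathcal{L}_z(f)+k(z+\mu)f^2$, where $k$ and $\mu$ are constants, then $f$ divides $z\,\mathcal{L}_z(h)-2k(z+\mu)h^2$ (in the polynomial ring $\mathbb{C}[z]$).
   Context: Here $\mathcal{L}_z$ is the Hirota-like operator defined in the claim; note that $h$ and $z\,\mathcal{L}_z(h)$ are polynomials when $f$ is a polynomial. *)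

theory Defs
  imports "HOL-Computational_Algebra.Polynomial" "HOL-Computational_Algebra.Fraction_Field"
begin

definition rat_of_poly :: "complex poly \<Rightarrow> complex poly fract" where
  "rat_of_poly p = Fract p 1"

definition Lz :: "complex poly \<Rightarrow> complex poly fract" where
  "Lz f = rat_of_poly (f * pderiv (pderiv f)) - rat_of_poly (pderiv f) ^ 2
          + (rat_of_poly f / rat_of_poly [:0, 1:]) * rat_of_poly (pderiv f)"

end

theory Submission
  imports Defs "HOL-Number_Theory.Cong"
begin

text \<open>Clearing the denominator, \<open>z L\<^sub>z(f) = z (f f'' - f'\<^sup>2) + f f'\<close> is a polynomial, and (a), (b)
  become polynomial identities. For (c) one computes modulo \<open>f\<close>: writing \<open>t = k (z + \<mu>)\<close>,
  \<open>h \<equiv> z f'\<^sup>2\<close>, \<open>h' \<equiv> z f' f''\<close> and \<open>h'' \<equiv> z f''\<^sup>2 - f' f'' + 2 t f'\<^sup>2\<close>, and substituting these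
  into \<open>z L\<^sub>z(h)\<close> leaves exactly \<open>2 t h\<^sup>2\<close>.\<close>

definition hirota :: "'a::idom poly \<Rightarrow> 'a poly" where
  "hirota f = [:0, 1:] * (f * pderiv (pderiv f) - pderiv f ^ 2) + f * pderiv f"

lemma hirota_smult: "hirota (smult k f) = smult (k ^ 2) (hirota f)"
  by (simp add: hirota_def pderiv_smult smult_add_right smult_diff_right power2_eq_square)

lemma hirota_mult: "hirota (f * g) = f ^ 2 * hirota g + g ^ 2 * hirota f"
  by (simp add: hirota_def pderiv_mult pderiv_add algebra_simps power2_eq_square)

lemma cong_mult_add_self_leftI:
  fixes m x y y' :: "'a::unique_euclidean_ring"
  assumes "[y = y'] (mod m)"
  shows "[m * x + y = y'] (mod m)"
  using assms by (simp add: cong_iff_dvd_diff dvd_add_right_iff add_diff_eq[symmetric])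

lemma hirota_shift_cong:
  fixes f t :: "'a::field poly"
  defines "h \<equiv> t * f ^ 2 - hirota f"
  shows "[hirota h = 2 * t * h ^ 2] (mod f)"
proof -
  define z :: "'a poly" where "z = [:0, 1:]"
  define a where "a = pderiv f"
  define b where "b = pderiv a"
  define c where "c = pderiv b"
  define A where "A = f * t + (- z * b - a)"
  have dz: "pderiv z = 1"
    by (simp add: z_def pderiv_pCons)
  have h_eq: "h = f * A + z * a ^ 2"
    by (simp add: h_def hirota_def A_def a_def b_def z_def algebra_simps power2_eq_square)
  have dA: "pderiv A = f * pderiv t + (t * a - z * c - 2 * b)"
    by (simp add: A_def pderiv_mult pderiv_diff pderiv_add dz a_def b_def c_def algebra_simps)
  have dh: "pderiv h = f * pderiv A + (a * A + a ^ 2 + 2 * z * a * b)"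
    by (simp add: h_eq pderiv_mult pderiv_add dz a_def b_def algebra_simps power2_eq_square)
  have ddh: "pderiv (pderiv h) = f * pderiv (pderiv A)
      + (b * A + 2 * a * pderiv A + 4 * a * b + 2 * z * b ^ 2 + 2 * z * a * c)"
    by (simp add: dh pderiv_mult pderiv_add dz a_def b_def c_def algebra_simps power2_eq_square)
  have A_mod: "[A = - z * b - a] (mod f)"
    unfolding A_def by (rule cong_mult_add_self_leftI) simp
  have dA_mod: "[pderiv A = t * a - z * c - 2 * b] (mod f)"
    unfolding dA by (rule cong_mult_add_self_leftI) simp
  have h0: "[h = z * a ^ 2] (mod f)"
    unfolding h_eq by (rule cong_mult_add_self_leftI) simp
  have h1: "[pderiv h = z * a * b] (mod f)"
    unfolding dh
  proof (rule cong_mult_add_self_leftI)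
    have "[a * A + a ^ 2 + 2 * z * a * b = a * (- z * b - a) + a ^ 2 + 2 * z * a * b] (mod f)"
      by (intro cong_add cong_mult cong_refl A_mod)
    then show "[a * A + a ^ 2 + 2 * z * a * b = z * a * b] (mod f)"
      by (simp add: algebra_simps power2_eq_square)
  qed
  have h2: "[pderiv (pderiv h) = z * b ^ 2 - a * b + 2 * t * a ^ 2] (mod f)"
    unfolding ddh
  proof (rule cong_mult_add_self_leftI)
    have "[b * A + 2 * a * pderiv A + 4 * a * b + 2 * z * b ^ 2 + 2 * z * a * c
        = b * (- z * b - a) + 2 * a * (t * a - z * c - 2 * b) + 4 * a * b + 2 * z * b ^ 2 + 2 * z * a * c] (mod f)"
      by (intro cong_add cong_mult cong_refl A_mod dA_mod)
    then show "[b * A + 2 * a * pderiv A + 4 * a * b + 2 * z * b ^ 2 + 2 * z * a * c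
        = z * b ^ 2 - a * b + 2 * t * a ^ 2] (mod f)"
      by (simp add: algebra_simps power2_eq_square)
  qed
  have "[hirota h = z * (z * a ^ 2 * (z * b ^ 2 - a * b + 2 * t * a ^ 2) - (z * a * b) ^ 2)
      + z * a ^ 2 * (z * a * b)] (mod f)"
    unfolding hirota_def z_def[symmetric] by (intro cong_add cong_diff cong_mult cong_pow cong_refl h0 h1 h2)
  then have "[hirota h = 2 * t * (z * a ^ 2) ^ 2] (mod f)"
    by (simp add: algebra_simps power2_eq_square)
  moreover have "[2 * t * (z * a ^ 2) ^ 2 = 2 * t * h ^ 2] (mod f)"
    by (intro cong_mult cong_pow cong_refl cong_sym [OF h0])
  ultimately show ?thesis
    by (rule cong_trans)
qed

lemma rat_of_poly_add: "rat_of_poly (p + q) = rat_of_poly p + rat_of_poly q"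
  by (simp add: rat_of_poly_def)

lemma rat_of_poly_diff: "rat_of_poly (p - q) = rat_of_poly p - rat_of_poly q"
  by (simp add: rat_of_poly_def)

lemma rat_of_poly_minus: "rat_of_poly (- p) = - rat_of_poly p"
  by (simp add: rat_of_poly_def)

lemma rat_of_poly_mult: "rat_of_poly (p * q) = rat_of_poly p * rat_of_poly q"
  by (simp add: rat_of_poly_def)

lemma rat_of_poly_power: "rat_of_poly (p ^ n) = rat_of_poly p ^ n"
  by (induction n) (simp_all add: rat_of_poly_mult, simp add: rat_of_poly_def One_fract_def)

lemma rat_of_poly_numeral: "rat_of_poly (numeral n) = numeral n"
  by (metis Fract_of_nat_eq of_nat_numeral rat_of_poly_def)

lemma rat_of_poly_eq_iff: "rat_of_poly p = rat_of_poly q \<longleftrightarrow> p = q"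
  by (simp add: rat_of_poly_def eq_fract)

lemmas rat_of_poly_simps =
  rat_of_poly_add rat_of_poly_diff rat_of_poly_minus rat_of_poly_mult rat_of_poly_power
  rat_of_poly_numeral

lemma rat_of_poly_X_nonzero: "rat_of_poly [:0, 1:] \<noteq> 0"
  by (simp add: rat_of_poly_def Zero_fract_def eq_fract)

lemma Lz_eq_hirota: "Lz f = rat_of_poly (hirota f) / rat_of_poly [:0, 1:]"
  using rat_of_poly_X_nonzero
  unfolding Lz_def hirota_def rat_of_poly_simps by (simp add: field_simps)

lemma rat_of_poly_hirota: "rat_of_poly (hirota f) = rat_of_poly [:0, 1:] * Lz f"
  using rat_of_poly_X_nonzero by (simp add: Lz_eq_hirota)

theorem lemma3p1:
  fixes f g :: "complex poly"
  shows "(\<forall>k :: complex. Lz (smult k f) = rat_of_poly [:k:] ^ 2 * Lz f)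
    \<and> Lz (f * g) = rat_of_poly f ^ 2 * Lz g + rat_of_poly g ^ 2 * Lz f
    \<and> (\<forall>(h :: complex poly) (k :: complex) (\<mu> :: complex).
         rat_of_poly h = - (rat_of_poly [:0, 1:] * Lz f)
                         + rat_of_poly [:k:] * rat_of_poly [:\<mu>, 1:] * rat_of_poly f ^ 2
         \<longrightarrow> (\<exists>q :: complex poly.
               rat_of_poly q = rat_of_poly [:0, 1:] * Lz h
                               - 2 * rat_of_poly [:k:] * rat_of_poly [:\<mu>, 1:] * rat_of_poly h ^ 2
             \<and> f dvd q))"
proof (intro conjI allI impI)
  fix k :: complex
  have "smult (k ^ 2) p = [:k:] ^ 2 * p" for p :: "complex poly"
    by (simp add: power2_eq_square)
  then show "Lz (smult k f) = rat_of_poly [:k:] ^ 2 * Lz f"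
    by (simp add: Lz_eq_hirota hirota_smult rat_of_poly_simps)
next
  show "Lz (f * g) = rat_of_poly f ^ 2 * Lz g + rat_of_poly g ^ 2 * Lz f"
    by (simp add: Lz_eq_hirota hirota_mult rat_of_poly_simps add_divide_distrib)
next
  fix h :: "complex poly" and k \<mu> :: complex
  define t where "t = [:k:] * [:\<mu>, 1:]"
  assume "rat_of_poly h = - (rat_of_poly [:0, 1:] * Lz f)
    + rat_of_poly [:k:] * rat_of_poly [:\<mu>, 1:] * rat_of_poly f ^ 2"
  then have "rat_of_poly h = rat_of_poly (t * f ^ 2 - hirota f)"
    unfolding t_def rat_of_poly_simps rat_of_poly_hirota by simp
  then have "h = t * f ^ 2 - hirota f"
    by (simp add: rat_of_poly_eq_iff)
  then have "f dvd hirota h - 2 * t * h ^ 2"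
    using hirota_shift_cong [of t f] by (simp add: cong_iff_dvd_diff)
  moreover have "rat_of_poly (hirota h - 2 * t * h ^ 2) = rat_of_poly [:0, 1:] * Lz h
    - 2 * rat_of_poly [:k:] * rat_of_poly [:\<mu>, 1:] * rat_of_poly h ^ 2"
    unfolding t_def rat_of_poly_simps rat_of_poly_hirota by simp
  ultimately show "\<exists>q. rat_of_poly q = rat_of_poly [:0, 1:] * Lz h
    - 2 * rat_of_poly [:k:] * rat_of_poly [:\<mu>, 1:] * rat_of_poly h ^ 2 \<and> f dvd q"
    by blast
qed

end
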